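(* Let $\Gamma$ be a group with $\operatorname{H}^1_b(\Gamma;\mathbb{R}) \cong 0$ and $\operatorname{H}^2_b(\Gamma;\mathbb{R}) \cong 0$. Then the second vanishing modulus of $\Gamma$ equals $1$.
   Context: $\operatorname{C}^n_b(\Gamma;\mathbb{R}) = \ell^\infty(\Gamma^{n+1})^\Gamma$ (bounded real functions invariant under the diagonal action) with supremum norm $|\cdot|_\infty$ and homogeneous coboundary $\delta^n_b$; $\operatorname{H}^*_b(\Gamma;\mathbb{R})$ is its cohomology. If $\operatorname{H}^n_b(\Gamma;\mathbb{R})\cong 0$, the $n$-th vanishing modulus of $\Gamma$ is the minimal $K \in \mathbb{R}_{\geq 0}\cup\{\infty\}$ such that for every $c \in \ker \delta^n_b$ there is $b \in \operatorname{C}^{n-1}_b(\Gamma;\mathbb{R})$ with $\delta^{n-1}_b(b) = c$ and $|b|_\infty \leq K|c|_\infty$. *)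

theory Defs
  imports Complex_Main "HOL-Library.Extended_Real"
begin

(* The group Gamma is a type 'a of class group_add (written additively, not
   necessarily commutative). An (n+1)-tuple in Gamma^(n+1) is a list of length n+1.
   A cochain of degree n is a function on lists that vanishes off length n+1. *)

definition bcochain :: "nat \<Rightarrow> ('a::group_add list \<Rightarrow> real) \<Rightarrow> bool" where
  "bcochain n c \<longleftrightarrow>
     (\<forall>xs. length xs \<noteq> Suc n \<longrightarrow> c xs = 0) \<and>
     (\<exists>B. \<forall>xs. length xs = Suc n \<longrightarrow> \<bar>c xs\<bar> \<le> B) \<and>
     (\<forall>g xs. length xs = Suc n \<longrightarrow> c (map (\<lambda>x. g + x) xs) = c xs)"

definition sup_norm :: "nat \<Rightarrow> ('a list \<Rightarrow> real) \<Rightarrow> real" where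
  "sup_norm n c = Sup {\<bar>c xs\<bar> | xs. length xs = Suc n}"

definition remove_nth :: "nat \<Rightarrow> 'a list \<Rightarrow> 'a list" where
  "remove_nth i xs = take i xs @ drop (Suc i) xs"

definition cob :: "nat \<Rightarrow> ('a list \<Rightarrow> real) \<Rightarrow> ('a list \<Rightarrow> real)" where
  "cob n c = (\<lambda>xs. if length xs = Suc (Suc n)
      then (\<Sum>i\<le>Suc n. (-1) ^ i * c (remove_nth i xs)) else 0)"

definition Hb_vanishes :: "'a::group_add itself \<Rightarrow> nat \<Rightarrow> bool" where
  "Hb_vanishes _ n \<longleftrightarrow>
     (\<forall>c::'a list \<Rightarrow> real. bcochain n c \<and> cob n c = (\<lambda>_. 0) \<longrightarrow>
        (if n = 0 then c = (\<lambda>_. 0)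
         else (\<exists>b::'a list \<Rightarrow> real. bcochain (n - 1) b \<and> cob (n - 1) b = c)))"

(* n-th vanishing modulus (n >= 1), as the infimum in [0,\<infinity>] of admissible constants *)
definition vanishing_modulus :: "'a::group_add itself \<Rightarrow> nat \<Rightarrow> ereal" where
  "vanishing_modulus _ n = Inf {K::ereal. K \<ge> 0 \<and>
     (\<forall>c::'a list \<Rightarrow> real. bcochain n c \<and> cob n c = (\<lambda>_. 0) \<longrightarrow>
        (\<exists>b::'a list \<Rightarrow> real. bcochain (n - 1) b \<and> cob (n - 1) b = c \<and>
           ereal (sup_norm (n - 1) b) \<le> K * ereal (sup_norm n c)))}"

end

theory Submission
  imports Defs
begin

(* An invariant bounded 1-cochain b is determined by f g = b [0, g], and the value of
   \<delta>b at [0, g, g + h] is the defect f g + f h - f (g + h) of f as a quasimorphism.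
   A bounded quasimorphism is bounded by its defect (compare f (n g) with n f g), so every
   bounded primitive b of a 2-cocycle c satisfies |b| \<le> |c|.  Conversely, for the
   indicator b of the diagonal, |\<delta>b| = 1, while every primitive b' of \<delta>b has
   b' [0, 0] = \<delta>b [0, 0, 0] = 1. *)

lemma length_remove_nth:
  "i < length xs \<Longrightarrow> length (remove_nth i xs) = length xs - 1"
  by (simp add: remove_nth_def)

lemma remove_nth_map: "remove_nth i (map f xs) = map f (remove_nth i xs)"
  by (simp add: remove_nth_def take_map drop_map)

lemma cob_1_Cons3: "cob (Suc 0) b [x, y, z] = b [y, z] - b [x, z] + b [x, y]"
  by (simp add: cob_def remove_nth_def atMost_Suc)

lemma cob_2_Cons4:
  "cob 2 b [x, y, z, w] = b [y, z, w] - b [x, z, w] + b [x, y, w] - b [x, y, z]"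
  by (simp add: cob_def remove_nth_def atMost_Suc numeral_2_eq_2)

lemma cob_2_cob_1: "cob 2 (cob 1 b) = (\<lambda>_. 0)"
proof
  fix xs :: "'a list"
  show "cob 2 (cob 1 b) xs = 0"
  proof (cases "length xs = 4")
    case True
    then obtain x y z w where "xs = [x, y, z, w]"
      by (auto simp: length_Suc_conv numeral_eq_Suc)
    then show ?thesis
      by (simp add: cob_2_Cons4 cob_1_Cons3)
  next
    case False
    then show ?thesis
      by (simp add: cob_def)
  qed
qed

lemma bcochain_cob:
  fixes c :: "'a::group_add list \<Rightarrow> real"
  assumes "bcochain n c"
  shows "bcochain (Suc n) (cob n c)"
proof -
  obtain B where B: "\<And>xs. length xs = Suc n \<Longrightarrow> \<bar>c xs\<bar> \<le> B"
    using assms unfolding bcochain_def by blast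
  have invariant: "c (map ((+) g) xs) = c xs" if "length xs = Suc n" for g xs
    using assms that unfolding bcochain_def by blast
  have length_face: "length (remove_nth i xs) = Suc n"
    if "length xs = Suc (Suc n)" "i \<le> Suc n" for i and xs :: "'a list"
    using that by (simp add: length_remove_nth)
  have "\<bar>cob n c xs\<bar> \<le> real (Suc (Suc n)) * B" if "length xs = Suc (Suc n)" for xs
  proof -
    have "\<bar>cob n c xs\<bar> = \<bar>\<Sum>i\<le>Suc n. (-1) ^ i * c (remove_nth i xs)\<bar>"
      using that by (simp add: cob_def del: sum.atMost_Suc)
    also have "\<dots> \<le> (\<Sum>i\<le>Suc n. \<bar>(-1) ^ i * c (remove_nth i xs)\<bar>)"
      by (rule sum_abs)
    also have "\<dots> \<le> (\<Sum>i\<le>Suc n. B)"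
      using that by (intro sum_mono) (simp add: abs_mult B length_face)
    finally show ?thesis
      by simp
  qed
  moreover have "cob n c (map ((+) g) xs) = cob n c xs" if "length xs = Suc (Suc n)" for g xs
    using that by (simp add: cob_def remove_nth_map invariant length_face)
  ultimately show ?thesis
    unfolding bcochain_def by (auto simp: cob_def)
qed

corollary bcochain_2_cob_1: "bcochain 1 c \<Longrightarrow> bcochain 2 (cob 1 c)"
  using bcochain_cob[of 1 c] by (simp add: numeral_2_eq_2)

lemma abs_le_sup_norm:
  assumes "bcochain n c" and "length xs = Suc n"
  shows "\<bar>c xs\<bar> \<le> sup_norm n c"
proof -
  have "bdd_above {\<bar>c xs\<bar> | xs. length xs = Suc n}"
    using assms(1) unfolding bcochain_def bdd_above_def by fast
  then show ?thesis
    unfolding sup_norm_def using assms(2) by (intro cSup_upper) auto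
qed

lemma sup_norm_le:
  assumes "\<And>xs. length xs = Suc n \<Longrightarrow> \<bar>c xs\<bar> \<le> D"
  shows "sup_norm n c \<le> D"
  unfolding sup_norm_def
proof (rule cSup_least)
  show "{\<bar>c xs\<bar> | xs. length xs = Suc n} \<noteq> {}"
    by (auto intro: exI[of _ "replicate (Suc n) undefined"])
qed (use assms in blast)

lemma bounded_quasimorphism_le_defect:
  fixes f :: "'a::monoid_add \<Rightarrow> real"
  assumes defect: "\<And>g h. \<bar>f (g + h) - f g - f h\<bar> \<le> D"
    and bounded: "\<And>x. \<bar>f x\<bar> \<le> B"
  shows "\<bar>f g\<bar> \<le> D"
proof (rule ccontr)
  define multiple where "multiple n = ((\<lambda>x. x + g) ^^ n) 0" for n
  have multiple: "\<bar>f (multiple (Suc n)) - real (Suc n) * f g\<bar> \<le> real n * D" for n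
  proof (induction n)
    case 0
    then show ?case
      by (simp add: multiple_def)
  next
    case (Suc n)
    have "\<bar>f (multiple (Suc n) + g) - f (multiple (Suc n)) - f g\<bar> \<le> D"
      by (rule defect)
    with Suc show ?case
      by (simp add: multiple_def algebra_simps)
  qed
  assume "\<not> \<bar>f g\<bar> \<le> D"
  then have excess: "\<bar>f g\<bar> - D > 0"
    by simp
  obtain n :: nat where "B / (\<bar>f g\<bar> - D) < real n"
    using reals_Archimedean2 by blast
  with excess have "B < real n * (\<bar>f g\<bar> - D)"
    by (simp add: field_simps)
  moreover have "\<bar>real (Suc n) * f g\<bar> = real (Suc n) * \<bar>f g\<bar>"
    by (simp add: abs_mult)
  ultimately show False
    using multiple[of n] bounded[of "multiple (Suc n)"] by (simp add: algebra_simps)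
qed

lemma sup_norm_le_sup_norm_cob_1:
  fixes b :: "'a::group_add list \<Rightarrow> real"
  assumes b: "bcochain 1 b"
  shows "sup_norm 1 b \<le> sup_norm 2 (cob 1 b)"
proof -
  define f where "f g = b [0, g]" for g
  have cob_le: "\<bar>cob 1 b [x, y, z]\<bar> \<le> sup_norm 2 (cob 1 b)" for x y z
    using bcochain_2_cob_1[OF b] by (rule abs_le_sup_norm) simp
  have b_eq_f: "b [x, y] = f (-x + y)" for x y
  proof -
    have "b (map ((+) (-x)) [x, y]) = b [x, y]"
      using b unfolding bcochain_def by (metis length_Cons list.size(3) One_nat_def)
    then show ?thesis
      by (simp add: f_def)
  qed
  have "\<bar>f (g + h) - f g - f h\<bar> \<le> sup_norm 2 (cob 1 b)" for g h
  proof -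
    have "cob 1 b [0, g, g + h] = f h - f (g + h) + f g"
      by (simp add: cob_1_Cons3 b_eq_f add.assoc[symmetric])
    then show ?thesis
      using cob_le[of 0 g "g + h"] by simp
  qed
  moreover obtain B where "\<And>xs. length xs = 2 \<Longrightarrow> \<bar>b xs\<bar> \<le> B"
    using b unfolding bcochain_def numeral_2_eq_2 One_nat_def by blast
  then have "\<bar>f g\<bar> \<le> B" for g
    by (simp add: f_def)
  ultimately have f_le: "\<bar>f g\<bar> \<le> sup_norm 2 (cob 1 b)" for g
    by (rule bounded_quasimorphism_le_defect)
  show ?thesis
  proof (rule sup_norm_le)
    fix xs :: "'a list"
    assume "length xs = Suc 1"
    then obtain x y where "xs = [x, y]"
      by (auto simp: length_Suc_conv)
    then show "\<bar>b xs\<bar> \<le> sup_norm 2 (cob 1 b)"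
      using f_le by (simp add: b_eq_f)
  qed
qed

definition diagonal_indicator :: "'a list \<Rightarrow> real" where
  "diagonal_indicator xs = of_bool (\<exists>x. xs = [x, x])"

lemma cob_1_diagonal_indicator:
  "cob (Suc 0) diagonal_indicator [x, y, z] = of_bool (y = z) - of_bool (x = z) + of_bool (x = y)"
  by (simp add: cob_1_Cons3 diagonal_indicator_def)

lemma bcochain_diagonal_indicator:
  "bcochain 1 (diagonal_indicator :: 'a::group_add list \<Rightarrow> real)"
  unfolding bcochain_def
proof (intro conjI allI impI exI)
  fix g and xs :: "'a list"
  assume "length xs = Suc 1"
  then obtain x y where "xs = [x, y]"
    by (auto simp: length_Suc_conv)
  then show "diagonal_indicator (map ((+) g) xs) = diagonal_indicator xs"
    by (simp add: diagonal_indicator_def)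
qed (auto simp: diagonal_indicator_def)

lemma sup_norm_cob_diagonal_indicator:
  "sup_norm 2 (cob 1 (diagonal_indicator :: 'a::group_add list \<Rightarrow> real)) = 1"
proof (rule antisym)
  show "sup_norm 2 (cob 1 (diagonal_indicator :: 'a list \<Rightarrow> real)) \<le> 1"
  proof (rule sup_norm_le)
    fix xs :: "'a list"
    assume "length xs = Suc 2"
    then obtain x y z where "xs = [x, y, z]"
      by (auto simp: length_Suc_conv numeral_2_eq_2)
    then show "\<bar>cob 1 diagonal_indicator xs\<bar> \<le> 1"
      by (simp add: cob_1_diagonal_indicator)
  qed
  have "\<bar>cob 1 (diagonal_indicator :: 'a list \<Rightarrow> real) [0, 0, 0]\<bar>
      \<le> sup_norm 2 (cob 1 (diagonal_indicator :: 'a list \<Rightarrow> real))"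
    using bcochain_2_cob_1[OF bcochain_diagonal_indicator] by (rule abs_le_sup_norm) simp
  then show "1 \<le> sup_norm 2 (cob 1 (diagonal_indicator :: 'a list \<Rightarrow> real))"
    by (simp add: cob_1_diagonal_indicator)
qed

lemma abs_cob_1_diagonal_le_sup_norm:
  assumes "bcochain 1 b"
  shows "\<bar>cob 1 b [x, x, x]\<bar> \<le> sup_norm 1 b"
  using abs_le_sup_norm[OF assms, of "[x, x]"] by (simp add: cob_1_Cons3)

theorem proposition4p15:
  assumes "Hb_vanishes TYPE('a::group_add) 1"
      and "Hb_vanishes TYPE('a) 2"
  shows "vanishing_modulus TYPE('a) 2 = 1"
proof -
  let ?admissible = "{K::ereal. K \<ge> 0 \<and>
     (\<forall>c::'a list \<Rightarrow> real. bcochain 2 c \<and> cob 2 c = (\<lambda>_. 0) \<longrightarrow>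
        (\<exists>b::'a list \<Rightarrow> real. bcochain (2 - 1) b \<and> cob (2 - 1) b = c \<and>
           ereal (sup_norm (2 - 1) b) \<le> K * ereal (sup_norm 2 c)))}"
  have "1 \<in> ?admissible"
    using assms(2) sup_norm_le_sup_norm_cob_1 unfolding Hb_vanishes_def by fastforce
  moreover have "1 \<le> K" if K: "K \<in> ?admissible" for K
  proof -
    obtain b :: "'a list \<Rightarrow> real"
      where b: "bcochain 1 b" "cob 1 b = cob 1 diagonal_indicator"
        and b_le: "ereal (sup_norm 1 b)
          \<le> K * ereal (sup_norm 2 (cob 1 (diagonal_indicator :: 'a list \<Rightarrow> real)))"
      using K bcochain_2_cob_1[OF bcochain_diagonal_indicator] cob_2_cob_1 by fastforce
    have "ereal 1 \<le> ereal (sup_norm 1 b)"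
      using abs_cob_1_diagonal_le_sup_norm[OF b(1), of 0] b(2)
      by (simp add: cob_1_diagonal_indicator)
    also have "\<dots> \<le> K"
      using b_le by (simp add: sup_norm_cob_diagonal_indicator del: One_nat_def)
    finally show ?thesis
      by (simp add: one_ereal_def)
  qed
  ultimately show ?thesis
    unfolding vanishing_modulus_def by (intro antisym Inf_lower Inf_greatest)
qed

end
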